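(* Suppose $f$ satisfies the separation property. Then for every $n\geqslant 1$: (1) if $A,B\in\mathcal{A}_n$ and $A\cap B\neq\emptyset$, then $A=B$; (2) if $A_{i_1\dots i_n},A_{j_1\dots j_n}\in\mathcal{A}_n$ and $A_{i_1\dots i_n}=A_{j_1\dots j_n}$, then $(i_1,\dots,i_n)=(j_1,\dots,j_n)$.
   Context: Let $(X,d)$ be a compact metric space, $X_1,\dots,X_N$ ($N\geqslant 2$) non-empty pairwise disjoint open subsets with $X=\bigcup_i\overline{X_i}$, and $f:X\to X$ a map such that each restriction $f|_{X_i}$ admits a continuous extension $f_i:\overline{X_i}\to X$. Separation property: each $f_i$ is injective and $f_i(\overline{X_i})\cap f_j(\overline{X_j})=\emptyset$ for $i\neq j$. For $A\subset X$ let $F_i(A):=\overline{f(A\cap X_i)}$; for $(i_1,\dots,i_n)\in\{1,\dots,N\}^n$, $A_{i_1\dots i_n}:=F_{i_n}\circ F_{i_{n-1}}\circ\dots\circ F_{i_1}(X)$ is called an atom of generation $n$ if it is non-empty, and $\mathcal{A}_n$ denotes the set of atoms of generation $n$. *)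

theory Defs
  imports "HOL-Analysis.Analysis"
begin

definition Fmap :: "(nat \<Rightarrow> 'a::metric_space set) \<Rightarrow> ('a \<Rightarrow> 'a) \<Rightarrow> nat \<Rightarrow> 'a set \<Rightarrow> 'a set" where
  "Fmap Xs f i A = closure (f ` (A \<inter> Xs i))"

text \<open>The set A_{i_1...i_n} = F_{i_n} o ... o F_{i_1} (X) for the word [i_1,...,i_n]
  (fold applies F_{i_1} first).\<close>
definition atom_set :: "'a::metric_space set \<Rightarrow> (nat \<Rightarrow> 'a set) \<Rightarrow> ('a \<Rightarrow> 'a) \<Rightarrow> nat list \<Rightarrow> 'a set" where
  "atom_set X Xs f w = fold (Fmap Xs f) w X"

definition atoms :: "'a::metric_space set \<Rightarrow> (nat \<Rightarrow> 'a set) \<Rightarrow> ('a \<Rightarrow> 'a) \<Rightarrow> nat \<Rightarrow> nat \<Rightarrow> 'a set set" where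
  "atoms X Xs f N n = {atom_set X Xs f w | w. length w = n \<and> set w \<subseteq> {1..N} \<and> atom_set X Xs f w \<noteq> {}}"

end

theory Submission
  imports Defs
begin

text \<open>Each \<open>F\<^sub>i\<close> is the image under the injective map \<open>f\<^sub>i\<close> of a closed piece of
  \<open>closure (X\<^sub>i)\<close>, and these images are pairwise disjoint. Hence a point of
  \<open>F\<^sub>i(A) \<inter> F\<^sub>j(B)\<close> forces \<open>i = j\<close> and has a common preimage in \<open>A \<inter> B\<close>;
  inducting along the words, two atoms of the same generation that meet have the same
  word, which gives both claims at once.\<close>

lemma closure_image_compact_domain:
  fixes g :: "'a::metric_space \<Rightarrow> 'b::metric_space"
  assumes "compact K" "continuous_on K g" "S \<subseteq> K"
  shows "closure (g ` S) = g ` closure S"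
proof
  have "closure S \<subseteq> K"
    using assms(1,3) by (simp add: closure_minimal compact_imp_closed)
  then have "compact (closure S)"
    using assms(1) by (metis closed_closure compact_Int_closed inf.absorb2)
  then have "closed (g ` closure S)"
    using \<open>closure S \<subseteq> K\<close> assms(2)
    by (meson compact_continuous_image compact_imp_closed continuous_on_subset)
  then show "closure (g ` S) \<subseteq> g ` closure S"
    by (simp add: closure_minimal closure_subset image_mono)
  show "g ` closure S \<subseteq> closure (g ` S)"
    using assms(2) \<open>closure S \<subseteq> K\<close> by (rule continuous_image_closure_subset)
qed

lemma atom_set_snoc: "atom_set X Xs f (w @ [i]) = Fmap Xs f i (atom_set X Xs f w)"
  by (simp add: atom_set_def)

lemma closed_atom_set:
  assumes "closed X"
  shows "closed (atom_set X Xs f w)"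
  using assms by (induction w rule: rev_induct) (simp_all add: atom_set_def Fmap_def)

locale separated_map =
  fixes X :: "'a::metric_space set" and Xs :: "nat \<Rightarrow> 'a set" and f :: "'a \<Rightarrow> 'a"
    and fi :: "nat \<Rightarrow> 'a \<Rightarrow> 'a" and I :: "nat set"
  assumes compact_space: "compact X"
    and closure_piece_subset: "\<And>i. i \<in> I \<Longrightarrow> closure (Xs i) \<subseteq> X"
    and continuous_ext: "\<And>i. i \<in> I \<Longrightarrow> continuous_on (closure (Xs i)) (fi i)"
    and ext_eq: "\<And>i x. i \<in> I \<Longrightarrow> x \<in> Xs i \<Longrightarrow> fi i x = f x"
    and inj_ext: "\<And>i. i \<in> I \<Longrightarrow> inj_on (fi i) (closure (Xs i))"
    and disjoint_ext_images: "\<And>i j. i \<in> I \<Longrightarrow> j \<in> I \<Longrightarrow> i \<noteq> j \<Longrightarrow>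
                                fi i ` closure (Xs i) \<inter> fi j ` closure (Xs j) = {}"
begin

lemma Fmap_eq_ext_image:
  assumes "i \<in> I"
  shows "Fmap Xs f i A = fi i ` closure (A \<inter> Xs i)"
proof -
  have "compact (closure (Xs i))"
    using compact_space closure_piece_subset[OF assms]
    by (metis closed_closure compact_Int_closed inf.absorb2)
  have "f ` (A \<inter> Xs i) = fi i ` (A \<inter> Xs i)"
    using ext_eq[OF assms] by auto
  then have "Fmap Xs f i A = closure (fi i ` (A \<inter> Xs i))"
    by (simp add: Fmap_def)
  also have "\<dots> = fi i ` closure (A \<inter> Xs i)"
    using \<open>compact (closure (Xs i))\<close> continuous_ext[OF assms]
    by (rule closure_image_compact_domain) (meson closure_subset inf_le2 order_trans)
  finally show ?thesis .
qed

lemma Fmap_meet: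
  assumes "i \<in> I" "j \<in> I" "closed A" "closed B"
    and "Fmap Xs f i A \<inter> Fmap Xs f j B \<noteq> {}"
  shows "i = j \<and> A \<inter> B \<noteq> {}"
proof -
  obtain a b where a: "a \<in> closure (A \<inter> Xs i)" and b: "b \<in> closure (B \<inter> Xs j)"
    and fab: "fi i a = fi j b"
    using assms(5) unfolding Fmap_eq_ext_image[OF assms(1)] Fmap_eq_ext_image[OF assms(2)]
    by auto
  have a_in: "a \<in> A \<inter> closure (Xs i)"
    using a closure_mono[of "A \<inter> Xs i"] closure_closed[OF assms(3)] by blast
  have b_in: "b \<in> B \<inter> closure (Xs j)"
    using b closure_mono[of "B \<inter> Xs j"] closure_closed[OF assms(4)] by blast
  have "i = j"
    using disjoint_ext_images[OF assms(1,2)] a_in b_in fab by blast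
  moreover have "a = b"
    using inj_ext[OF assms(1)] a_in b_in fab \<open>i = j\<close> by (auto dest: inj_onD)
  ultimately show ?thesis
    using a_in b_in by blast
qed

lemma atom_sets_meet_imp_eq:
  assumes "length v = length w" "set v \<subseteq> I" "set w \<subseteq> I"
    and "atom_set X Xs f v \<inter> atom_set X Xs f w \<noteq> {}"
  shows "v = w"
  using assms
proof (induction v w rule: rev_induct2)
  case (4 i v j w)
  have "closed (atom_set X Xs f v)" "closed (atom_set X Xs f w)"
    using compact_space by (simp_all add: closed_atom_set compact_imp_closed)
  with "4.prems" have "i = j \<and> atom_set X Xs f v \<inter> atom_set X Xs f w \<noteq> {}"
    by (intro Fmap_meet) (auto simp: atom_set_snoc)
  with "4.IH" "4.prems" show ?case
    by simp
qed simp_all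

end

theorem lemma1:
  fixes X :: "'a::metric_space set" and Xs :: "nat \<Rightarrow> 'a set" and f :: "'a \<Rightarrow> 'a"
    and fi :: "nat \<Rightarrow> 'a \<Rightarrow> 'a" and N :: nat
  assumes "compact X"
    and "N \<ge> 2"
    and "\<And>i. i \<in> {1..N} \<Longrightarrow> Xs i \<noteq> {}"
    and "\<And>i. i \<in> {1..N} \<Longrightarrow> openin (top_of_set X) (Xs i)"
    and "\<And>i j. i \<in> {1..N} \<Longrightarrow> j \<in> {1..N} \<Longrightarrow> i \<noteq> j \<Longrightarrow> Xs i \<inter> Xs j = {}"
    and "X = (\<Union>i\<in>{1..N}. closure (Xs i))"
    and "f ` X \<subseteq> X"
    and "\<And>i. i \<in> {1..N} \<Longrightarrow> continuous_on (closure (Xs i)) (fi i)"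
    and "\<And>i. i \<in> {1..N} \<Longrightarrow> fi i ` closure (Xs i) \<subseteq> X"
    and "\<And>i x. i \<in> {1..N} \<Longrightarrow> x \<in> Xs i \<Longrightarrow> fi i x = f x"
    and sep_inj: "\<And>i. i \<in> {1..N} \<Longrightarrow> inj_on (fi i) (closure (Xs i))"
    and sep_disj: "\<And>i j. i \<in> {1..N} \<Longrightarrow> j \<in> {1..N} \<Longrightarrow> i \<noteq> j \<Longrightarrow>
                      fi i ` closure (Xs i) \<inter> fi j ` closure (Xs j) = {}"
    and "n \<ge> 1"
  shows "(\<forall>A\<in>atoms X Xs f N n. \<forall>B\<in>atoms X Xs f N n. A \<inter> B \<noteq> {} \<longrightarrow> A = B)
       \<and> (\<forall>v w. length v = n \<and> set v \<subseteq> {1..N} \<and> atom_set X Xs f v \<noteq> {}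
              \<and> length w = n \<and> set w \<subseteq> {1..N} \<and> atom_set X Xs f w \<noteq> {}
              \<and> atom_set X Xs f v = atom_set X Xs f w \<longrightarrow> v = w)"
proof -
  interpret separated_map X Xs f fi "{1..N}"
    using assms(1,6,8,10) sep_inj sep_disj by unfold_locales blast+
  show ?thesis
    unfolding atoms_def using atom_sets_meet_imp_eq by (fastforce simp: Int_absorb)
qed

end
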